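(* Let $X\neq\emptyset$ be a set, $\Phi$ a nonempty set of bounded functions $X\to\mathbb{R}$ that is compact with respect to $D_\Phi$, and assume $(X,D_X)$ is complete. Let $G$ be a subgroup of $\mathrm{Homeo}_\Phi(X)$, equipped with the pseudo-metric $D_G$. Then $G$ is a topological group with respect to the topology induced by $D_G$ (composition $G\times G\to G$ and inversion $G\to G$ are continuous), and the right action $\Phi\times G\to\Phi$, $(\varphi,g)\mapsto\varphi\circ g$, is continuous (with respect to $D_\Phi$ and $D_G$).
   Context: $D_\Phi(\varphi_1,\varphi_2):=\|\varphi_1-\varphi_2\|_\infty$. $D_X(x_1,x_2):=\sup_{\varphi\in\Phi}|\varphi(x_1)-\varphi(x_2)|$. $\mathrm{Homeo}_\Phi(X)$ is the group of bijections $g:X\to X$ that are homeomorphisms for the topology of $D_X$ and satisfy $\varphi\circ g\in\Phi$ and $\varphi\circ g^{-1}\in\Phi$ for all $\varphi\in\Phi$. For $g_1,g_2\in G$, $D_G(g_1,g_2):=\sup_{\varphi\in\Phi}D_\Phi(\varphi\circ g_1,\varphi\circ g_2)$. *)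

theory Defs
  imports "HOL-Analysis.Analysis"
begin

text \<open>The underlying set X is the whole (nonempty) type 'a.\<close>

definition pm_topology :: "'a set \<Rightarrow> ('a \<Rightarrow> 'a \<Rightarrow> real) \<Rightarrow> 'a topology" where
  "pm_topology S d = topology (\<lambda>U. U \<subseteq> S \<and> (\<forall>x\<in>U. \<exists>e>0. \<forall>y\<in>S. d x y < e \<longrightarrow> y \<in> U))"

definition pm_complete :: "'a set \<Rightarrow> ('a \<Rightarrow> 'a \<Rightarrow> real) \<Rightarrow> bool" where
  "pm_complete S d \<longleftrightarrow>
     (\<forall>\<sigma>. (\<forall>n. \<sigma> n \<in> S) \<and> (\<forall>e>0. \<exists>N. \<forall>m n. N \<le> m \<and> N \<le> n \<longrightarrow> d (\<sigma> m) (\<sigma> n) < e)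
        \<longrightarrow> (\<exists>l\<in>S. (\<lambda>n. d (\<sigma> n) l) \<longlonglongrightarrow> 0))"

definition D_Phi :: "('a \<Rightarrow> real) \<Rightarrow> ('a \<Rightarrow> real) \<Rightarrow> real" where
  "D_Phi \<phi>1 \<phi>2 = (SUP x. \<bar>\<phi>1 x - \<phi>2 x\<bar>)"

definition D_X :: "('a \<Rightarrow> real) set \<Rightarrow> 'a \<Rightarrow> 'a \<Rightarrow> real" where
  "D_X \<Phi> x1 x2 = (SUP \<phi>\<in>\<Phi>. \<bar>\<phi> x1 - \<phi> x2\<bar>)"

definition Homeo_Phi :: "('a \<Rightarrow> real) set \<Rightarrow> ('a \<Rightarrow> 'a) set" where
  "Homeo_Phi \<Phi> = {g. bij g
      \<and> homeomorphic_map (pm_topology UNIV (D_X \<Phi>)) (pm_topology UNIV (D_X \<Phi>)) g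
      \<and> (\<forall>\<phi>\<in>\<Phi>. \<phi> \<circ> g \<in> \<Phi> \<and> \<phi> \<circ> inv g \<in> \<Phi>)}"

definition D_G :: "('a \<Rightarrow> real) set \<Rightarrow> ('a \<Rightarrow> 'a) \<Rightarrow> ('a \<Rightarrow> 'a) \<Rightarrow> real" where
  "D_G \<Phi> g1 g2 = (SUP \<phi>\<in>\<Phi>. D_Phi (\<phi> \<circ> g1) (\<phi> \<circ> g2))"

definition is_subgroup_of :: "('a \<Rightarrow> 'a) set \<Rightarrow> ('a \<Rightarrow> 'a) set \<Rightarrow> bool" where
  "is_subgroup_of G H \<longleftrightarrow> G \<subseteq> H \<and> id \<in> G \<and> (\<forall>g\<in>G. \<forall>h\<in>G. g \<circ> h \<in> G) \<and> (\<forall>g\<in>G. inv g \<in> G)"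

end

theory Submission
  imports Defs
begin

text \<open>All three maps are Lipschitz in each variable. Since every \<open>g \<in> G\<close> maps \<open>\<Phi>\<close> into
itself by precomposition, \<open>D_G(gh, g'h') \<le> D_G(g, g') + D_G(h, h')\<close>; since \<open>g\<^sup>-\<^sup>1\<close> does too,
substituting \<open>x = g' y\<close> gives \<open>D_G(g\<^sup>-\<^sup>1, g'\<^sup>-\<^sup>1) \<le> D_G(g, g')\<close>; and directly
\<open>D_\<Phi>(\<phi> g, \<phi>' g') \<le> D_\<Phi>(\<phi>, \<phi>') + D_G(g, g')\<close>. Compactness of \<open>\<Phi>\<close> enters only to make \<open>\<Phi>\<close>
uniformly bounded (a finite \<open>1\<close>-net of bounded functions), which is what makes the
suprema defining \<open>D_G\<close> finite.\<close>

definition pseudo_metric_on :: "'a set \<Rightarrow> ('a \<Rightarrow> 'a \<Rightarrow> real) \<Rightarrow> bool" where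
  "pseudo_metric_on S d \<longleftrightarrow>
     (\<forall>x\<in>S. d x x = 0) \<and> (\<forall>x\<in>S. \<forall>y\<in>S. \<forall>z\<in>S. d x z \<le> d x y + d y z)"

lemma openin_pm_topology:
  "openin (pm_topology S d) U \<longleftrightarrow> U \<subseteq> S \<and> (\<forall>x\<in>U. \<exists>e>0. \<forall>y\<in>S. d x y < e \<longrightarrow> y \<in> U)"
proof -
  have "istopology (\<lambda>U. U \<subseteq> S \<and> (\<forall>x\<in>U. \<exists>e>0. \<forall>y\<in>S. d x y < e \<longrightarrow> y \<in> U))"
    unfolding istopology_def
  proof (rule conjI; intro allI impI)
    fix A B
    assume A: "A \<subseteq> S \<and> (\<forall>x\<in>A. \<exists>e>0. \<forall>y\<in>S. d x y < e \<longrightarrow> y \<in> A)"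
      and B: "B \<subseteq> S \<and> (\<forall>x\<in>B. \<exists>e>0. \<forall>y\<in>S. d x y < e \<longrightarrow> y \<in> B)"
    show "A \<inter> B \<subseteq> S \<and> (\<forall>x\<in>A \<inter> B. \<exists>e>0. \<forall>y\<in>S. d x y < e \<longrightarrow> y \<in> A \<inter> B)"
    proof (intro conjI ballI)
      fix x assume "x \<in> A \<inter> B"
      then obtain e1 e2 where "e1 > 0" "e2 > 0"
        "\<forall>y\<in>S. d x y < e1 \<longrightarrow> y \<in> A" "\<forall>y\<in>S. d x y < e2 \<longrightarrow> y \<in> B"
        using A B by blast
      then show "\<exists>e>0. \<forall>y\<in>S. d x y < e \<longrightarrow> y \<in> A \<inter> B"
        by (intro exI[of _ "min e1 e2"]) auto
    qed (use A in blast)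
  qed (meson Union_iff Union_least)
  then show ?thesis
    unfolding pm_topology_def by simp
qed

lemma topspace_pm_topology [simp]: "topspace (pm_topology S d) = S"
proof -
  have "openin (pm_topology S d) S"
    unfolding openin_pm_topology using zero_less_one by blast
  then show ?thesis
    using openin_subset openin_pm_topology[of S d "topspace (pm_topology S d)"] by auto
qed

lemma openin_pm_ball:
  assumes "pseudo_metric_on S d" and "x \<in> S"
  shows "openin (pm_topology S d) {y\<in>S. d x y < r}"
  unfolding openin_pm_topology
proof (intro conjI ballI)
  fix z assume z: "z \<in> {y\<in>S. d x y < r}"
  show "\<exists>e>0. \<forall>y\<in>S. d z y < e \<longrightarrow> y \<in> {y\<in>S. d x y < r}"
  proof (intro exI[of _ "r - d x z"] conjI ballI impI)
    fix y assume "y \<in> S" "d z y < r - d x z"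
    then show "y \<in> {y\<in>S. d x y < r}"
      using assms z unfolding pseudo_metric_on_def by fastforce
  qed (use z in simp)
qed auto

lemma continuous_map_pm_topologyI:
  assumes "f ` S \<subseteq> T"
    and "\<And>x e. x \<in> S \<Longrightarrow> e > 0 \<Longrightarrow> \<exists>k>0. \<forall>y\<in>S. d x y < k \<longrightarrow> d' (f x) (f y) < e"
  shows "continuous_map (pm_topology S d) (pm_topology T d') f"
  unfolding continuous_map topspace_pm_topology
proof (intro conjI allI impI assms(1))
  fix U assume "openin (pm_topology T d') U"
  then have U: "U \<subseteq> T" "\<forall>z\<in>U. \<exists>e>0. \<forall>y\<in>T. d' z y < e \<longrightarrow> y \<in> U"
    by (auto simp: openin_pm_topology)
  show "openin (pm_topology S d) {x \<in> S. f x \<in> U}"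
    unfolding openin_pm_topology
  proof (intro conjI ballI)
    fix x assume x: "x \<in> {x \<in> S. f x \<in> U}"
    then obtain e where "e > 0" "\<forall>y\<in>T. d' (f x) y < e \<longrightarrow> y \<in> U"
      using U by blast
    moreover obtain k where "k > 0" "\<forall>y\<in>S. d x y < k \<longrightarrow> d' (f x) (f y) < e"
      using assms(2) x \<open>e > 0\<close> by blast
    ultimately show "\<exists>k>0. \<forall>y\<in>S. d x y < k \<longrightarrow> y \<in> {x \<in> S. f x \<in> U}"
      using assms(1) by (intro exI[of _ k]) auto
  qed auto
qed

lemma continuous_map_pm_prod_topologyI:
  assumes "pseudo_metric_on S d1" and "pseudo_metric_on T d2"
    and "\<And>x y. x \<in> S \<Longrightarrow> y \<in> T \<Longrightarrow> f (x, y) \<in> R"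
    and "\<And>x y e. x \<in> S \<Longrightarrow> y \<in> T \<Longrightarrow> e > 0 \<Longrightarrow> \<exists>k>0. \<forall>x'\<in>S. \<forall>y'\<in>T.
           d1 x x' < k \<longrightarrow> d2 y y' < k \<longrightarrow> d3 (f (x, y)) (f (x', y')) < e"
  shows "continuous_map (prod_topology (pm_topology S d1) (pm_topology T d2)) (pm_topology R d3) f"
  unfolding continuous_map topspace_pm_topology topspace_prod_topology
proof (intro conjI allI impI)
  show "f ` (S \<times> T) \<subseteq> R"
    using assms(3) by auto
  fix U assume "openin (pm_topology R d3) U"
  then have U: "\<forall>z\<in>U. \<exists>e>0. \<forall>y\<in>R. d3 z y < e \<longrightarrow> y \<in> U"
    by (auto simp: openin_pm_topology)
  show "openin (prod_topology (pm_topology S d1) (pm_topology T d2)) {z \<in> S \<times> T. f z \<in> U}"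
    unfolding openin_prod_topology_alt
  proof (intro allI impI)
    fix x y assume xy: "(x, y) \<in> {z \<in> S \<times> T. f z \<in> U}"
    then obtain e where "e > 0" "\<forall>z\<in>R. d3 (f (x, y)) z < e \<longrightarrow> z \<in> U"
      using U by blast
    moreover obtain k where "k > 0" "\<forall>x'\<in>S. \<forall>y'\<in>T.
        d1 x x' < k \<longrightarrow> d2 y y' < k \<longrightarrow> d3 (f (x, y)) (f (x', y')) < e"
      using assms(4)[of x y e] xy \<open>e > 0\<close> by auto
    moreover have "d1 x x = 0" "d2 y y = 0"
      using assms(1,2) xy unfolding pseudo_metric_on_def by auto
    ultimately show "\<exists>A B. openin (pm_topology S d1) A \<and> openin (pm_topology T d2) B \<and>
        x \<in> A \<and> y \<in> B \<and> A \<times> B \<subseteq> {z \<in> S \<times> T. f z \<in> U}"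
      using xy assms(3)
      by (intro exI[of _ "{x'\<in>S. d1 x x' < k}"] exI[of _ "{y'\<in>T. d2 y y' < k}"])
         (auto intro!: openin_pm_ball assms(1,2))
  qed
qed

lemma continuous_map_pm_topology_Lipschitz:
  assumes "f ` S \<subseteq> T" and "\<And>x y. x \<in> S \<Longrightarrow> y \<in> S \<Longrightarrow> d' (f x) (f y) \<le> d x y"
  shows "continuous_map (pm_topology S d) (pm_topology T d') f"
proof (rule continuous_map_pm_topologyI[OF assms(1)])
  fix x and e :: real assume "x \<in> S" "e > 0"
  then show "\<exists>k>0. \<forall>y\<in>S. d x y < k \<longrightarrow> d' (f x) (f y) < e"
    using assms(2) by (meson order.strict_trans1)
qed

lemma continuous_map_pm_prod_topology_Lipschitz:
  assumes "pseudo_metric_on S d1" and "pseudo_metric_on T d2"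
    and "\<And>x y. x \<in> S \<Longrightarrow> y \<in> T \<Longrightarrow> f (x, y) \<in> R"
    and "\<And>x y x' y'. x \<in> S \<Longrightarrow> y \<in> T \<Longrightarrow> x' \<in> S \<Longrightarrow> y' \<in> T \<Longrightarrow>
           d3 (f (x, y)) (f (x', y')) \<le> d1 x x' + d2 y y'"
  shows "continuous_map (prod_topology (pm_topology S d1) (pm_topology T d2)) (pm_topology R d3) f"
proof (rule continuous_map_pm_prod_topologyI[OF assms(1,2)])
  show "\<And>x y. x \<in> S \<Longrightarrow> y \<in> T \<Longrightarrow> f (x, y) \<in> R"
    by (fact assms(3))
  fix x y and e :: real assume "x \<in> S" "y \<in> T" "e > 0"
  then show "\<exists>k>0. \<forall>x'\<in>S. \<forall>y'\<in>T. d1 x x' < k \<longrightarrow> d2 y y' < k \<longrightarrow> d3 (f (x, y)) (f (x', y')) < e"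
  proof (intro exI[of _ "e/2"] conjI ballI impI)
    fix x' y' assume "x' \<in> S" "y' \<in> T" "d1 x x' < e/2" "d2 y y' < e/2"
    then show "d3 (f (x, y)) (f (x', y')) < e"
      using assms(4)[of x y x' y'] \<open>x \<in> S\<close> \<open>y \<in> T\<close> by linarith
  qed (use \<open>e > 0\<close> in simp)
qed

lemma compact_pm_topology_finite_net:
  assumes "compact_space (pm_topology S d)" and "pseudo_metric_on S d" and "e > 0"
  obtains F where "finite F" "F \<subseteq> S" "\<And>y. y \<in> S \<Longrightarrow> \<exists>x\<in>F. d x y < e"
proof -
  define N where "N x = {y\<in>S. d x y < e}" for x
  have "S \<subseteq> \<Union>(N ` S)"
  proof
    fix y assume "y \<in> S"
    then have "y \<in> N y"
      using assms(2,3) unfolding N_def pseudo_metric_on_def by simp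
    then show "y \<in> \<Union>(N ` S)"
      using \<open>y \<in> S\<close> by blast
  qed
  moreover have "\<forall>U\<in>N ` S. openin (pm_topology S d) U"
    unfolding N_def using openin_pm_ball[OF assms(2)] by blast
  ultimately obtain \<F> where \<F>: "finite \<F>" "\<F> \<subseteq> N ` S" "S \<subseteq> \<Union>\<F>"
    using assms(1)[unfolded compact_space_alt topspace_pm_topology, rule_format, of "N ` S"]
    by blast
  then obtain F where F: "F \<subseteq> S" "finite F" "\<F> = N ` F"
    by (meson finite_subset_image)
  show thesis
  proof (rule that[OF F(2,1)])
    fix y assume "y \<in> S"
    then obtain x where "x \<in> F" "y \<in> N x"
      using \<F>(3) F(3) by blast
    then show "\<exists>x\<in>F. d x y < e"
      unfolding N_def by blast
  qed
qed

lemma abs_diff_le_D_Phi: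
  fixes f g :: "'a \<Rightarrow> real"
  assumes "bounded (range f)" and "bounded (range g)"
  shows "\<bar>f x - g x\<bar> \<le> D_Phi f g"
proof -
  obtain a b where "\<forall>y. \<bar>f y\<bar> \<le> a" "\<forall>y. \<bar>g y\<bar> \<le> b"
    using assms by (auto simp: bounded_real)
  then have "bdd_above (range (\<lambda>y. \<bar>f y - g y\<bar>))"
    by (intro bdd_aboveI2[of _ _ "a + b"]) (smt (verit))
  then show ?thesis
    unfolding D_Phi_def by (rule cSUP_upper[rotated]) simp
qed

lemma D_Phi_le:
  assumes "\<And>x. \<bar>f x - g x\<bar> \<le> c"
  shows "D_Phi f g \<le> c"
  unfolding D_Phi_def by (rule cSUP_least) (auto simp: assms)

lemma D_Phi_self [simp]: "D_Phi f f = 0"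
  unfolding D_Phi_def by simp

lemma pseudo_metric_on_D_Phi:
  assumes "\<forall>\<phi>\<in>\<Phi>. bounded (range \<phi>)"
  shows "pseudo_metric_on \<Phi> D_Phi"
  unfolding pseudo_metric_on_def
proof (intro conjI ballI)
  fix f g h assume "f \<in> \<Phi>" "g \<in> \<Phi>" "h \<in> \<Phi>"
  then have "\<bar>f x - g x\<bar> \<le> D_Phi f g" "\<bar>g x - h x\<bar> \<le> D_Phi g h" for x
    using assms by (blast intro: abs_diff_le_D_Phi)+
  then have "\<bar>f x - h x\<bar> \<le> D_Phi f g + D_Phi g h" for x
    using abs_triangle_ineq[of "f x - g x" "g x - h x"] by (smt (verit))
  then show "D_Phi f h \<le> D_Phi f g + D_Phi g h"
    by (rule D_Phi_le)
qed simp

lemma compact_D_Phi_imp_bounded_UN_range: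
  assumes bdd: "\<forall>\<phi>\<in>\<Phi>. bounded (range \<phi>)"
    and "compact_space (pm_topology \<Phi> D_Phi)"
  shows "bounded (\<Union>\<phi>\<in>\<Phi>. range \<phi>)"
proof -
  obtain F where F: "finite F" "F \<subseteq> \<Phi>" and net: "\<And>\<psi>. \<psi> \<in> \<Phi> \<Longrightarrow> \<exists>\<phi>\<in>F. D_Phi \<phi> \<psi> < 1"
    using compact_pm_topology_finite_net[OF assms(2) pseudo_metric_on_D_Phi[OF bdd] zero_less_one]
    by blast
  have "bounded (\<Union>\<phi>\<in>F. range \<phi>)"
    using F bdd by blast
  then obtain a where a: "\<And>\<phi> x. \<phi> \<in> F \<Longrightarrow> \<bar>\<phi> x\<bar> \<le> a"
    by (auto simp: bounded_real)
  have "\<bar>\<psi> x\<bar> \<le> a + 1" if "\<psi> \<in> \<Phi>" for \<psi> x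
  proof -
    obtain \<phi> where "\<phi> \<in> F" "D_Phi \<phi> \<psi> < 1"
      using net \<open>\<psi> \<in> \<Phi>\<close> by blast
    moreover have "\<bar>\<phi> x - \<psi> x\<bar> \<le> D_Phi \<phi> \<psi>"
      using bdd F \<open>\<phi> \<in> F\<close> \<open>\<psi> \<in> \<Phi>\<close> by (blast intro: abs_diff_le_D_Phi)
    ultimately show ?thesis
      using a[of \<phi> x] by linarith
  qed
  then show ?thesis
    by (auto simp: bounded_real)
qed

lemma abs_diff_le_D_G:
  assumes "bounded (\<Union>\<phi>\<in>\<Phi>. range \<phi>)" and "\<phi> \<in> \<Phi>"
  shows "\<bar>\<phi> (g1 x) - \<phi> (g2 x)\<bar> \<le> D_G \<Phi> g1 g2"
proof -
  obtain a where a: "\<And>\<psi> y. \<psi> \<in> \<Phi> \<Longrightarrow> \<bar>\<psi> y\<bar> \<le> a"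
    using assms(1) by (auto simp: bounded_real)
  have bdd: "bounded (range (\<psi> \<circ> g))" if "\<psi> \<in> \<Phi>" for \<psi> g
    using a[OF that] by (auto simp: bounded_real)
  have "\<bar>(\<phi> \<circ> g1) x - (\<phi> \<circ> g2) x\<bar> \<le> D_Phi (\<phi> \<circ> g1) (\<phi> \<circ> g2)"
    by (intro abs_diff_le_D_Phi bdd assms(2))
  also have "\<dots> \<le> D_G \<Phi> g1 g2"
    unfolding D_G_def
  proof (rule cSUP_upper[OF assms(2)], rule bdd_aboveI2)
    fix \<psi> assume "\<psi> \<in> \<Phi>"
    show "D_Phi (\<psi> \<circ> g1) (\<psi> \<circ> g2) \<le> 2 * a"
      using a[OF \<open>\<psi> \<in> \<Phi>\<close>] by (intro D_Phi_le) (smt (verit) comp_apply)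
  qed
  finally show ?thesis
    by simp
qed

lemma D_G_le:
  assumes "\<Phi> \<noteq> {}" and "\<And>\<phi> x. \<phi> \<in> \<Phi> \<Longrightarrow> \<bar>\<phi> (g1 x) - \<phi> (g2 x)\<bar> \<le> c"
  shows "D_G \<Phi> g1 g2 \<le> c"
  unfolding D_G_def using assms by (intro cSUP_least D_Phi_le) auto

lemma pseudo_metric_on_D_G:
  assumes "\<Phi> \<noteq> {}" and "bounded (\<Union>\<phi>\<in>\<Phi>. range \<phi>)"
  shows "pseudo_metric_on G (D_G \<Phi>)"
  unfolding pseudo_metric_on_def
proof (intro conjI ballI)
  fix g assume "g \<in> G"
  obtain \<phi> where "\<phi> \<in> \<Phi>"
    using assms(1) by blast
  then have "0 \<le> D_G \<Phi> g g"
    using abs_diff_le_D_G[OF assms(2) \<open>\<phi> \<in> \<Phi>\<close>, of g undefined g] by simp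
  moreover have "D_G \<Phi> g g \<le> 0"
    using assms(1) by (rule D_G_le) simp
  ultimately show "D_G \<Phi> g g = 0"
    by simp
next
  fix g1 g2 g3 show "D_G \<Phi> g1 g3 \<le> D_G \<Phi> g1 g2 + D_G \<Phi> g2 g3"
    using assms(1)
  proof (rule D_G_le)
    fix \<phi> x assume "\<phi> \<in> \<Phi>"
    then have "\<bar>\<phi> (g1 x) - \<phi> (g2 x)\<bar> \<le> D_G \<Phi> g1 g2" "\<bar>\<phi> (g2 x) - \<phi> (g3 x)\<bar> \<le> D_G \<Phi> g2 g3"
      using abs_diff_le_D_G[OF assms(2)] by blast+
    then show "\<bar>\<phi> (g1 x) - \<phi> (g3 x)\<bar> \<le> D_G \<Phi> g1 g2 + D_G \<Phi> g2 g3"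
      by linarith
  qed
qed

lemma D_G_comp_le:
  assumes "\<Phi> \<noteq> {}" and "bounded (\<Union>\<phi>\<in>\<Phi>. range \<phi>)" and "\<forall>\<phi>\<in>\<Phi>. \<phi> \<circ> g \<in> \<Phi>"
  shows "D_G \<Phi> (g \<circ> h) (g' \<circ> h') \<le> D_G \<Phi> g g' + D_G \<Phi> h h'"
  using assms(1)
proof (rule D_G_le)
  fix \<phi> x assume "\<phi> \<in> \<Phi>"
  then have "\<bar>(\<phi> \<circ> g) (h x) - (\<phi> \<circ> g) (h' x)\<bar> \<le> D_G \<Phi> h h'"
    "\<bar>\<phi> (g (h' x)) - \<phi> (g' (h' x))\<bar> \<le> D_G \<Phi> g g'"
    using assms(3) abs_diff_le_D_G[OF assms(2)] by blast+
  then show "\<bar>\<phi> ((g \<circ> h) x) - \<phi> ((g' \<circ> h') x)\<bar> \<le> D_G \<Phi> g g' + D_G \<Phi> h h'"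
    by simp
qed

lemma D_G_inv_le:
  assumes "\<Phi> \<noteq> {}" and "bounded (\<Union>\<phi>\<in>\<Phi>. range \<phi>)" and "\<forall>\<phi>\<in>\<Phi>. \<phi> \<circ> inv g \<in> \<Phi>"
    and "inj g" and "surj g'"
  shows "D_G \<Phi> (inv g) (inv g') \<le> D_G \<Phi> g g'"
  using assms(1)
proof (rule D_G_le)
  fix \<phi> x assume "\<phi> \<in> \<Phi>"
  define y where "y = inv g' x"
  have "x = g' y" "inv g (g y) = y"
    unfolding y_def using assms(4,5) by (simp_all add: surj_f_inv_f)
  moreover have "\<bar>(\<phi> \<circ> inv g) (g y) - (\<phi> \<circ> inv g) (g' y)\<bar> \<le> D_G \<Phi> g g'"
    using assms(3) abs_diff_le_D_G[OF assms(2)] \<open>\<phi> \<in> \<Phi>\<close> by blast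
  ultimately show "\<bar>\<phi> (inv g x) - \<phi> (inv g' x)\<bar> \<le> D_G \<Phi> g g'"
    by (simp add: y_def abs_minus_commute)
qed

lemma D_Phi_comp_le:
  assumes "bounded (\<Union>\<phi>\<in>\<Phi>. range \<phi>)" and "\<phi> \<in> \<Phi>" and "\<phi>' \<in> \<Phi>"
  shows "D_Phi (\<phi> \<circ> g) (\<phi>' \<circ> g') \<le> D_Phi \<phi> \<phi>' + D_G \<Phi> g g'"
proof (rule D_Phi_le)
  fix x
  have "bounded (range \<psi>)" if "\<psi> \<in> \<Phi>" for \<psi>
    by (rule bounded_subset[OF assms(1)]) (use that in blast)
  then have "\<bar>\<phi> (g x) - \<phi>' (g x)\<bar> \<le> D_Phi \<phi> \<phi>'"
    using assms(2,3) by (blast intro: abs_diff_le_D_Phi)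
  moreover have "\<bar>\<phi>' (g x) - \<phi>' (g' x)\<bar> \<le> D_G \<Phi> g g'"
    using assms(1,3) by (rule abs_diff_le_D_G)
  ultimately show "\<bar>(\<phi> \<circ> g) x - (\<phi>' \<circ> g') x\<bar> \<le> D_Phi \<phi> \<phi>' + D_G \<Phi> g g'"
    by simp
qed

theorem mainTheorem5:
  fixes \<Phi> :: "('a \<Rightarrow> real) set" and G :: "('a \<Rightarrow> 'a) set"
  assumes "\<Phi> \<noteq> {}"
    and "\<forall>\<phi>\<in>\<Phi>. bounded (range \<phi>)"
    and "compact_space (pm_topology \<Phi> D_Phi)"
    and "pm_complete UNIV (D_X \<Phi>)"
    and "is_subgroup_of G (Homeo_Phi \<Phi>)"
  shows "continuous_map (prod_topology (pm_topology G (D_G \<Phi>)) (pm_topology G (D_G \<Phi>)))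
           (pm_topology G (D_G \<Phi>)) (\<lambda>(g, h). g \<circ> h)
     \<and> continuous_map (pm_topology G (D_G \<Phi>)) (pm_topology G (D_G \<Phi>)) inv
     \<and> continuous_map (prod_topology (pm_topology \<Phi> D_Phi) (pm_topology G (D_G \<Phi>)))
           (pm_topology \<Phi> D_Phi) (\<lambda>(\<phi>, g). \<phi> \<circ> g)"
proof (intro conjI)
  have bdd: "bounded (\<Union>\<phi>\<in>\<Phi>. range \<phi>)"
    using assms(2,3) by (rule compact_D_Phi_imp_bounded_UN_range)
  have pm_G: "pseudo_metric_on G (D_G \<Phi>)"
    using assms(1) bdd by (rule pseudo_metric_on_D_G)
  have G: "\<And>g h. g \<in> G \<Longrightarrow> h \<in> G \<Longrightarrow> g \<circ> h \<in> G" "\<And>g. g \<in> G \<Longrightarrow> inv g \<in> G"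
    and hom: "\<And>g. g \<in> G \<Longrightarrow> bij g \<and> (\<forall>\<phi>\<in>\<Phi>. \<phi> \<circ> g \<in> \<Phi> \<and> \<phi> \<circ> inv g \<in> \<Phi>)"
    using assms(5) unfolding is_subgroup_of_def Homeo_Phi_def by blast+
  show "continuous_map (prod_topology (pm_topology G (D_G \<Phi>)) (pm_topology G (D_G \<Phi>)))
      (pm_topology G (D_G \<Phi>)) (\<lambda>(g, h). g \<circ> h)"
    by (rule continuous_map_pm_prod_topology_Lipschitz[OF pm_G pm_G])
      (simp_all add: G D_G_comp_le[OF assms(1) bdd] hom)
  show "continuous_map (pm_topology G (D_G \<Phi>)) (pm_topology G (D_G \<Phi>)) inv"
    using G(2) by (intro continuous_map_pm_topology_Lipschitz)
      (auto intro!: D_G_inv_le[OF assms(1) bdd] bij_is_inj bij_is_surj dest: hom)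
  show "continuous_map (prod_topology (pm_topology \<Phi> D_Phi) (pm_topology G (D_G \<Phi>)))
      (pm_topology \<Phi> D_Phi) (\<lambda>(\<phi>, g). \<phi> \<circ> g)"
    using pseudo_metric_on_D_Phi[OF assms(2)] pm_G
    by (rule continuous_map_pm_prod_topology_Lipschitz)
      (simp_all add: D_Phi_comp_le[OF bdd] hom)
qed

end
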